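(* $W_{\max}(20,9)\in\{4,5,\dots,34\}$.
   Context: A weighing matrix of order $n$ and weight $k$ is an $n\times n$ matrix $W$ with entries in $\{1,-1,0\}$ such that $WW^T=kI_n$. Two weighing matrices $W_1,W_2$ of order $n$ and weight $k$ are unbiased if $\frac{1}{\sqrt{k}}W_1W_2^T$ is also a weighing matrix of order $n$ and weight $k$; a set is mutually unbiased if any two distinct members are unbiased. $W_{\max}(n,9)$ denotes the maximum size of a set of mutually unbiased weighing matrices of order $n$ and weight $9$. *)

theory Defs
  imports "Jordan_Normal_Form.Matrix"
begin

text \<open>Matrices are taken over the reals so that
  the scaled product (1/sqrt k) W1 W2^T can be formed directly.\<close>
definition weighing_matrix :: "nat \<Rightarrow> nat \<Rightarrow> real mat \<Rightarrow> bool" where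
  "weighing_matrix n k W \<longleftrightarrow>
     W \<in> carrier_mat n n \<and>
     (\<forall>i<n. \<forall>j<n. W $$ (i, j) \<in> {1, -1, 0}) \<and>
     W * transpose_mat W = of_nat k \<cdot>\<^sub>m 1\<^sub>m n"

definition unbiased_wm :: "nat \<Rightarrow> nat \<Rightarrow> real mat \<Rightarrow> real mat \<Rightarrow> bool" where
  "unbiased_wm n k W1 W2 \<longleftrightarrow>
     weighing_matrix n k W1 \<and> weighing_matrix n k W2 \<and>
     weighing_matrix n k ((1 / sqrt (real k)) \<cdot>\<^sub>m (W1 * transpose_mat W2))"

definition mutually_unbiased_wm :: "nat \<Rightarrow> nat \<Rightarrow> real mat set \<Rightarrow> bool" where
  "mutually_unbiased_wm n k S \<longleftrightarrow>
     (\<forall>W\<in>S. weighing_matrix n k W) \<and>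
     (\<forall>W1\<in>S. \<forall>W2\<in>S. W1 \<noteq> W2 \<longrightarrow> unbiased_wm n k W1 W2)"

text \<open>Maximum size of a set of mutually unbiased weighing matrices of order n, weight k.
  (Such sets are finite since there are finitely many weighing matrices of a given order.)\<close>
definition W_max :: "nat \<Rightarrow> nat \<Rightarrow> nat" where
  "W_max n k = Max {card S | S. finite S \<and> mutually_unbiased_wm n k S}"

end

theory Submission
  imports Defs "Jordan_Normal_Form.Determinant" "HOL-Analysis.Convex"
begin

text \<open>The lower bound is an explicit set of four mutually unbiased weighing matrices, checked
  by evaluation. For the upper bound, let the vectors r_x range over the N = n |S| rows of all
  matrices of a mutually unbiased set S of weighing matrices of order n and weight k. Rows of
  the same matrix have inner product k or 0, rows of different matrices have inner product 0 or
  \<plusminus>\<surd>k, hence \<Sum>_y <r_x, r_y>^4 = k^4 + (|S| - 1) k^3 for every x. Cauchy-Schwarz for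
  T = \<Sum>_x r_x^\<otimes>4 and a test tensor Q, using <r_x^\<otimes>4, r_y^\<otimes>4> = <r_x, r_y>^4, gives
  (\<Sum>_x <r_x^\<otimes>4, Q>)^2 \<le> (\<Sum>_x_y <r_x, r_y>^4) |Q|^2. For
  Q = 8 (\<delta>_ab \<delta>_ce + \<delta>_ac \<delta>_be + \<delta>_ae \<delta>_bc) - 5 \<delta>_abce the pairing
  <v^\<otimes>4, Q> = 24 |v|^4 - 5 \<Sum>_a v_a^4 equals 24 k^2 - 5 k on every row, and
  |Q|^2 = 192 n^2 + 169 n; for n = 20 and k = 9 the inequality forces |S| \<le> 34.\<close>

definition tensor4 :: "('a \<Rightarrow> real) \<Rightarrow> 'a \<times> 'a \<times> 'a \<times> 'a \<Rightarrow> real" where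
  "tensor4 v = (\<lambda>(a, b, c, e). v a * v b * v c * v e)"

lemma sum_tensor4: "(\<Sum>p\<in>A \<times> A \<times> A \<times> A. tensor4 v p) = (\<Sum>a\<in>A. v a) ^ 4"
  by (simp only: tensor4_def split_def sum.cartesian_product' fst_conv snd_conv
      mult.assoc flip: sum_distrib_left sum_distrib_right) (simp add: power4_eq_xxxx mult_ac)

lemma sum_tensor4_mult:
  "(\<Sum>p\<in>A \<times> A \<times> A \<times> A. tensor4 v p * tensor4 w p) = (\<Sum>a\<in>A. v a * w a) ^ 4"
proof -
  have "tensor4 v p * tensor4 w p = tensor4 (\<lambda>a. v a * w a) p" for p
    by (cases p) (simp add: tensor4_def mult_ac)
  then show ?thesis
    by (simp add: sum_tensor4)
qed

lemma tensor4_design_bound: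
  fixes r :: "'x \<Rightarrow> 'a \<Rightarrow> real" and Q :: "'a \<times> 'a \<times> 'a \<times> 'a \<Rightarrow> real"
  shows "(\<Sum>x\<in>I. \<Sum>p\<in>A \<times> A \<times> A \<times> A. tensor4 (r x) p * Q p)\<^sup>2
    \<le> (\<Sum>x\<in>I. \<Sum>y\<in>I. (\<Sum>a\<in>A. r x a * r y a) ^ 4) * (\<Sum>p\<in>A \<times> A \<times> A \<times> A. (Q p)\<^sup>2)"
proof -
  define T where "T p = (\<Sum>x\<in>I. tensor4 (r x) p)" for p
  have lhs: "(\<Sum>x\<in>I. \<Sum>p\<in>A \<times> A \<times> A \<times> A. tensor4 (r x) p * Q p) = (\<Sum>p\<in>A \<times> A \<times> A \<times> A. T p * Q p)"
    unfolding T_def sum_distrib_right by (rule sum.swap)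
  have "(\<Sum>p\<in>A \<times> A \<times> A \<times> A. (T p)\<^sup>2)
      = (\<Sum>p\<in>A \<times> A \<times> A \<times> A. \<Sum>x\<in>I. \<Sum>y\<in>I. tensor4 (r x) p * tensor4 (r y) p)"
    by (simp add: T_def power2_eq_square sum_product)
  also have "\<dots> = (\<Sum>x\<in>I. \<Sum>p\<in>A \<times> A \<times> A \<times> A. \<Sum>y\<in>I. tensor4 (r x) p * tensor4 (r y) p)"
    by (rule sum.swap)
  also have "\<dots> = (\<Sum>x\<in>I. \<Sum>y\<in>I. \<Sum>p\<in>A \<times> A \<times> A \<times> A. tensor4 (r x) p * tensor4 (r y) p)"
    by (rule sum.cong[OF refl], rule sum.swap)
  also have "\<dots> = (\<Sum>x\<in>I. \<Sum>y\<in>I. (\<Sum>a\<in>A. r x a * r y a) ^ 4)"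
    by (simp add: sum_tensor4_mult)
  finally show ?thesis
    using Cauchy_Schwarz_ineq_sum[of T Q "A \<times> A \<times> A \<times> A"] lhs by simp
qed

definition quartic_test :: "'a \<times> 'a \<times> 'a \<times> 'a \<Rightarrow> real" where
  "quartic_test = (\<lambda>(a, b, c, e).
     8 * (of_bool (a = b \<and> c = e) + of_bool (a = c \<and> b = e) + of_bool (a = e \<and> b = c))
     - 5 * of_bool (a = b \<and> b = c \<and> c = e))"

lemma sum_mult_of_bool_image:
  fixes F :: "'a \<Rightarrow> real"
  assumes "finite P" "inj_on g B" "g ` B \<subseteq> P"
  shows "(\<Sum>p\<in>P. F p * of_bool (p \<in> g ` B)) = (\<Sum>b\<in>B. F (g b))"
proof -
  have "(\<Sum>p\<in>P. F p * of_bool (p \<in> g ` B)) = (\<Sum>p\<in>P. if p \<in> g ` B then F p else 0)"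
    by (intro sum.cong) auto
  also have "\<dots> = sum F (P \<inter> g ` B)"
    using assms(1) by (simp add: sum.inter_restrict)
  also have "P \<inter> g ` B = g ` B"
    using assms(3) by blast
  finally show ?thesis
    using assms(2) by (simp add: sum.reindex)
qed

lemma sum_mult_quartic_test:
  assumes "finite A"
  shows "(\<Sum>p\<in>A \<times> A \<times> A \<times> A. F p * quartic_test p)
    = 8 * ((\<Sum>a\<in>A. \<Sum>c\<in>A. F (a, a, c, c)) + (\<Sum>a\<in>A. \<Sum>b\<in>A. F (a, b, a, b))
         + (\<Sum>a\<in>A. \<Sum>b\<in>A. F (a, b, b, a))) - 5 * (\<Sum>a\<in>A. F (a, a, a, a))"
proof -
  let ?P = "A \<times> A \<times> A \<times> A"
  define g1 g2 g3 :: "'a \<times> 'a \<Rightarrow> 'a \<times> 'a \<times> 'a \<times> 'a" where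
    "g1 = (\<lambda>(a, c). (a, a, c, c))" and "g2 = (\<lambda>(a, b). (a, b, a, b))" and "g3 = (\<lambda>(a, b). (a, b, b, a))"
  define g0 :: "'a \<Rightarrow> 'a \<times> 'a \<times> 'a \<times> 'a" where "g0 = (\<lambda>a. (a, a, a, a))"
  have Q: "quartic_test p = 8 * (of_bool (p \<in> g1 ` (A \<times> A)) + of_bool (p \<in> g2 ` (A \<times> A))
      + of_bool (p \<in> g3 ` (A \<times> A))) - 5 * of_bool (p \<in> g0 ` A)" if "p \<in> ?P" for p
    using that by (cases p) (auto simp: quartic_test_def g0_def g1_def g2_def g3_def image_iff)
  have "(\<Sum>p\<in>?P. F p * quartic_test p)
      = 8 * ((\<Sum>p\<in>?P. F p * of_bool (p \<in> g1 ` (A \<times> A))) + (\<Sum>p\<in>?P. F p * of_bool (p \<in> g2 ` (A \<times> A)))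
        + (\<Sum>p\<in>?P. F p * of_bool (p \<in> g3 ` (A \<times> A)))) - 5 * (\<Sum>p\<in>?P. F p * of_bool (p \<in> g0 ` A))"
    by (simp add: Q algebra_simps sum.distrib sum_subtractf sum_distrib_left cong: sum.cong)
  also have "\<dots> = 8 * ((\<Sum>b\<in>A \<times> A. F (g1 b)) + (\<Sum>b\<in>A \<times> A. F (g2 b)) + (\<Sum>b\<in>A \<times> A. F (g3 b)))
      - 5 * (\<Sum>a\<in>A. F (g0 a))"
    using assms by (subst (1 2 3 4) sum_mult_of_bool_image)
      (auto simp: inj_on_def g0_def g1_def g2_def g3_def)
  finally show ?thesis
    by (simp add: g0_def g1_def g2_def g3_def sum.cartesian_product split_def)
qed

lemma sum_tensor4_mult_quartic_test:
  assumes "finite A"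
  shows "(\<Sum>p\<in>A \<times> A \<times> A \<times> A. tensor4 v p * quartic_test p)
    = 24 * (\<Sum>a\<in>A. (v a)\<^sup>2)\<^sup>2 - 5 * (\<Sum>a\<in>A. (v a) ^ 4)"
  using assms by (subst sum_mult_quartic_test)
    (simp_all add: tensor4_def power2_eq_square power4_eq_xxxx sum_product mult_ac)

lemma sum_quartic_test_squared:
  assumes "finite A"
  shows "(\<Sum>p\<in>A \<times> A \<times> A \<times> A. (quartic_test p)\<^sup>2) = 192 * (card A)\<^sup>2 + 169 * card A"
proof -
  have "quartic_test (a, a, c, c) = 8 + (if a = c then 11 else 0)"
    "quartic_test (a, c, a, c) = 8 + (if a = c then 11 else 0)"
    "quartic_test (a, c, c, a) = 8 + (if a = c then 11 else 0)" for a c :: 'a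
    by (auto simp: quartic_test_def)
  moreover have "quartic_test (a, a, a, a) = 19" for a :: 'a
    by (simp add: quartic_test_def)
  ultimately show ?thesis
    using sum_mult_quartic_test[OF assms, of quartic_test] assms
    by (simp add: power2_eq_square sum.distrib algebra_simps)
qed

lemma smult_smult_mat: "a \<cdot>\<^sub>m (b \<cdot>\<^sub>m A) = (a * b :: 'a :: semigroup_mult) \<cdot>\<^sub>m A"
  by (rule eq_matI) (auto simp: mult.assoc)

lemma one_smult_mat: "1 \<cdot>\<^sub>m A = (A :: 'a :: monoid_mult mat)"
  by (rule eq_matI) auto

lemma transpose_smult_mat: "transpose_mat (a \<cdot>\<^sub>m A) = a \<cdot>\<^sub>m transpose_mat A"
  by (rule eq_matI) auto

lemma index_mult_transpose_mat:
  assumes "A \<in> carrier_mat n n" "B \<in> carrier_mat n n" "i < n" "j < n"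
  shows "(A * transpose_mat B) $$ (i, j) = (\<Sum>a<n. A $$ (i, a) * B $$ (j, a))"
  using assms by (simp add: scalar_prod_def atLeast0LessThan)

lemma weighing_matrix_row_norm:
  assumes "weighing_matrix n k W" "i < n"
  shows "(\<Sum>a<n. (W $$ (i, a))\<^sup>2) = k"
proof -
  have W: "W \<in> carrier_mat n n" and "W * transpose_mat W = of_nat k \<cdot>\<^sub>m 1\<^sub>m n"
    using assms(1) by (auto simp: weighing_matrix_def)
  then have "(W * transpose_mat W) $$ (i, i) = k"
    using assms(2) by simp
  then show ?thesis
    using index_mult_transpose_mat[OF W W assms(2) assms(2)] by (simp add: power2_eq_square)
qed

lemma weighing_matrix_row_pow4:
  assumes "weighing_matrix n k W" "i < n"
  shows "(\<Sum>a<n. (W $$ (i, a)) ^ 4) = k"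
proof -
  have "W $$ (i, a) \<in> {1, -1, 0}" if "a < n" for a
    using assms that by (simp add: weighing_matrix_def)
  then have "(W $$ (i, a)) ^ 4 = (W $$ (i, a))\<^sup>2" if "a < n" for a
    using that by fastforce
  then show ?thesis
    using weighing_matrix_row_norm[OF assms] by simp
qed

lemma weighing_matrix_transpose_mult:
  assumes "weighing_matrix n k W" "k > 0"
  shows "transpose_mat W * W = of_nat k \<cdot>\<^sub>m 1\<^sub>m n"
proof -
  have W: "W \<in> carrier_mat n n" and WW: "W * transpose_mat W = of_nat k \<cdot>\<^sub>m 1\<^sub>m n"
    using assms(1) by (auto simp: weighing_matrix_def)
  have Wt: "(1 / of_nat k) \<cdot>\<^sub>m transpose_mat W \<in> carrier_mat n n"
    using W by simp
  have "W * ((1 / of_nat k) \<cdot>\<^sub>m transpose_mat W) = (1 / of_nat k * of_nat k) \<cdot>\<^sub>m 1\<^sub>m n"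
    using W by (simp add: mult_smult_distrib[of W n n "transpose_mat W" n] WW smult_smult_mat)
  also have "\<dots> = 1\<^sub>m n"
    using assms(2) by (simp add: one_smult_mat)
  finally have "((1 / of_nat k) \<cdot>\<^sub>m transpose_mat W) * W = 1\<^sub>m n"
    by (rule mat_mult_left_right_inverse[OF W Wt])
  then have "of_nat k \<cdot>\<^sub>m ((1 / of_nat k) \<cdot>\<^sub>m (transpose_mat W * W)) = of_nat k \<cdot>\<^sub>m 1\<^sub>m n"
    using W by (simp add: mult_smult_assoc_mat[of _ n n W n])
  then show ?thesis
    using assms(2) by (simp add: smult_smult_mat one_smult_mat)
qed

lemma weighing_matrix_transpose:
  assumes "weighing_matrix n k W" "k > 0"
  shows "weighing_matrix n k (transpose_mat W)"
proof -
  have W: "W \<in> carrier_mat n n" and entries: "\<forall>i<n. \<forall>j<n. W $$ (i, j) \<in> {1, -1, 0}"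
    using assms(1) by (auto simp: weighing_matrix_def)
  then have "\<forall>i<n. \<forall>j<n. transpose_mat W $$ (i, j) \<in> {1, -1, 0}"
    by simp
  then show ?thesis
    using W weighing_matrix_transpose_mult[OF assms] by (simp add: weighing_matrix_def)
qed

lemma unbiased_wm_commute:
  assumes "unbiased_wm n k A B" "k > 0"
  shows "unbiased_wm n k B A"
proof -
  have "A \<in> carrier_mat n n" "B \<in> carrier_mat n n"
    using assms(1) by (auto simp: unbiased_wm_def weighing_matrix_def)
  then have "transpose_mat (A * transpose_mat B) = B * transpose_mat A"
    using transpose_mult[of A n n "transpose_mat B" n] by simp
  then have "(1 / sqrt k) \<cdot>\<^sub>m (B * transpose_mat A) = transpose_mat ((1 / sqrt k) \<cdot>\<^sub>m (A * transpose_mat B))"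
    by (simp add: transpose_smult_mat)
  then show ?thesis
    using assms weighing_matrix_transpose by (auto simp: unbiased_wm_def)
qed

lemma unbiased_wm_of_entries:
  assumes A: "weighing_matrix n k A" and B: "weighing_matrix n k B" and "k > 0"
    and entries: "\<And>i j. i < n \<Longrightarrow> j < n \<Longrightarrow> (A * transpose_mat B) $$ (i, j) \<in> {sqrt k, - sqrt k, 0}"
  shows "unbiased_wm n k A B"
proof -
  have Ac: "A \<in> carrier_mat n n" and AA: "A * transpose_mat A = of_nat k \<cdot>\<^sub>m 1\<^sub>m n"
    using A by (auto simp: weighing_matrix_def)
  have Bc: "B \<in> carrier_mat n n"
    using B by (auto simp: weighing_matrix_def)
  define P where "P = A * transpose_mat B"
  define M where "M = (1 / sqrt k) \<cdot>\<^sub>m P"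
  have Pc: "P \<in> carrier_mat n n"
    using Ac Bc by (simp add: P_def)
  then have dimP: "dim_row P = n" "dim_col P = n"
    by auto
  have "P * transpose_mat P = A * (transpose_mat B * B) * transpose_mat A"
    using Ac Bc by (simp add: P_def transpose_mult[of A n n] assoc_mult_mat[of _ n n _ n _ n])
  also have "\<dots> = of_nat k \<cdot>\<^sub>m (A * transpose_mat A)"
    using Ac by (simp add: weighing_matrix_transpose_mult[OF B \<open>k > 0\<close>]
        mult_smult_assoc_mat[of _ n n _ n] mult_smult_distrib[of _ n n _ n])
  finally have PP: "P * transpose_mat P = (of_nat k * of_nat k) \<cdot>\<^sub>m 1\<^sub>m n"
    by (simp add: AA smult_smult_mat)
  have "1 / sqrt k * (1 / sqrt k * (of_nat k * of_nat k)) = (of_nat k :: real)"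
    using \<open>k > 0\<close> by (simp add: field_simps)
  then have "M * transpose_mat M = of_nat k \<cdot>\<^sub>m 1\<^sub>m n"
    using Pc by (simp add: M_def transpose_smult_mat mult_smult_assoc_mat[of _ n n _ n]
        mult_smult_distrib[of _ n n _ n] PP smult_smult_mat)
  moreover have "M $$ (i, j) \<in> {1, -1, 0}" if "i < n" "j < n" for i j
    using entries[OF that] that dimP \<open>k > 0\<close> by (auto simp: M_def P_def)
  moreover have "M \<in> carrier_mat n n"
    using Pc by (simp add: M_def)
  ultimately show ?thesis
    using A B by (simp add: unbiased_wm_def weighing_matrix_def M_def P_def)
qed

lemma not_unbiased_wm_self:
  assumes "n > 0" "k > 1"
  shows "\<not> unbiased_wm n k W W"
proof
  assume U: "unbiased_wm n k W W"
  then have "W * transpose_mat W = of_nat k \<cdot>\<^sub>m 1\<^sub>m n"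
    by (simp add: unbiased_wm_def weighing_matrix_def)
  moreover have "weighing_matrix n k ((1 / sqrt k) \<cdot>\<^sub>m (W * transpose_mat W))"
    using U by (simp add: unbiased_wm_def)
  ultimately have "\<forall>i<n. \<forall>j<n. ((1 / sqrt k) \<cdot>\<^sub>m (of_nat k \<cdot>\<^sub>m 1\<^sub>m n)) $$ (i, j) \<in> {1, -1, 0}"
    unfolding weighing_matrix_def by simp
  then have "((1 / sqrt k) \<cdot>\<^sub>m (of_nat k \<cdot>\<^sub>m 1\<^sub>m n)) $$ (0, 0) \<in> {1, -1, 0 :: real}"
    using assms(1) by blast
  moreover have "((1 / sqrt k) \<cdot>\<^sub>m (of_nat k \<cdot>\<^sub>m 1\<^sub>m n)) $$ (0, 0) = sqrt k"
    using assms(1) by (simp add: real_div_sqrt)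
  ultimately have "sqrt k \<in> {1, -1, 0}"
    by metis
  moreover have "sqrt k > 1"
    using assms(2) by simp
  ultimately show False
    by auto
qed

lemma unbiased_wm_row_pow4:
  assumes "unbiased_wm n k W V" "k > 0" "i < n"
  shows "(\<Sum>j<n. ((W * transpose_mat V) $$ (i, j)) ^ 4) = (real k) ^ 3"
proof -
  define M where "M = (1 / sqrt k) \<cdot>\<^sub>m (W * transpose_mat V)"
  have M: "weighing_matrix n k M"
    using assms(1) by (simp add: unbiased_wm_def M_def)
  have "W \<in> carrier_mat n n" "V \<in> carrier_mat n n"
    using assms(1) by (auto simp: unbiased_wm_def weighing_matrix_def)
  then have "dim_row (W * transpose_mat V) = n" "dim_col (W * transpose_mat V) = n"
    by auto
  then have entry: "(W * transpose_mat V) $$ (i, j) = sqrt k * M $$ (i, j)" if "j < n" for j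
    using assms(2,3) that by (simp add: M_def)
  have sqrt4: "sqrt (real k) ^ 4 = (real k)\<^sup>2"
    using power_mult[of "sqrt (real k)" 2 2] by simp
  have "(\<Sum>j<n. ((W * transpose_mat V) $$ (i, j)) ^ 4) = (\<Sum>j<n. (real k)\<^sup>2 * (M $$ (i, j)) ^ 4)"
    by (intro sum.cong refl) (simp add: entry power_mult_distrib sqrt4)
  also have "\<dots> = (real k)\<^sup>2 * k"
    using weighing_matrix_row_pow4[OF M assms(3)] by (simp flip: sum_distrib_left)
  finally show ?thesis
    by (simp add: power2_eq_square power3_eq_cube)
qed

lemma sum_pow4_mult_transpose_mutually_unbiased_wm:
  assumes "finite S" "mutually_unbiased_wm n k S" "k > 0" "W \<in> S" "i < n"
  shows "(\<Sum>V\<in>S. \<Sum>j<n. ((W * transpose_mat V) $$ (i, j)) ^ 4)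
    = (real k) ^ 4 + (real (card S) - 1) * (real k) ^ 3"
proof -
  define f where "f V = (\<Sum>j<n. ((W * transpose_mat V) $$ (i, j)) ^ 4)" for V
  have "(\<Sum>V\<in>S. f V) = f W + (\<Sum>V\<in>S - {W}. f V)"
    using assms(1,4) by (rule sum.remove)
  also have "f W = (\<Sum>j<n. if j = i then (real k) ^ 4 else 0)"
    using assms(2,4,5) unfolding f_def
    by (intro sum.cong) (auto simp: mutually_unbiased_wm_def weighing_matrix_def)
  also have "\<dots> = (real k) ^ 4"
    using assms(5) by simp
  also have "(\<Sum>V\<in>S - {W}. f V) = (\<Sum>V\<in>S - {W}. (real k) ^ 3)"
  proof (rule sum.cong[OF refl])
    fix V assume "V \<in> S - {W}"
    then have "unbiased_wm n k W V"
      using assms(2,4) by (auto simp: mutually_unbiased_wm_def)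
    then show "f V = (real k) ^ 3"
      unfolding f_def by (rule unbiased_wm_row_pow4[OF _ assms(3,5)])
  qed
  also have "\<dots> = (real (card S) - 1) * (real k) ^ 3"
  proof -
    have "card S \<ge> 1"
      using assms(1,4) by (auto simp: Suc_le_eq card_gt_0_iff)
    then show ?thesis
      using assms(1,4) by (simp add: of_nat_diff)
  qed
  finally show ?thesis
    unfolding f_def .
qed

lemma mutually_unbiased_wm_design_inequality:
  assumes "finite S" "mutually_unbiased_wm n k S" "k > 0"
  defines "N \<equiv> real n * real (card S)"
  shows "(N * (24 * (real k)\<^sup>2 - 5 * real k))\<^sup>2
    \<le> N * ((real k) ^ 4 + (real (card S) - 1) * (real k) ^ 3) * (192 * (real n)\<^sup>2 + 169 * real n)"
proof -
  define I where "I = S \<times> {..<n}"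
  define r where "r x a = fst x $$ (snd x, a)" for x :: "real mat \<times> nat" and a
  let ?P = "{..<n} \<times> {..<n} \<times> {..<n} \<times> {..<n}"
  have wm: "weighing_matrix n k W" if "W \<in> S" for W
    using assms(2) that by (simp add: mutually_unbiased_wm_def)
  have carrier: "W \<in> carrier_mat n n" if "W \<in> S" for W
    using wm[OF that] by (simp add: weighing_matrix_def)
  have card_I: "real (card I) = N"
    using assms(1) by (simp add: I_def N_def card_cartesian_product)
  have row_test: "(\<Sum>p\<in>?P. tensor4 (r x) p * quartic_test p) = 24 * (real k)\<^sup>2 - 5 * real k"
    if "x \<in> I" for x
    using that weighing_matrix_row_norm[OF wm] weighing_matrix_row_pow4[OF wm]
    by (auto simp: sum_tensor4_mult_quartic_test I_def r_def)
  have row_overlap: "(\<Sum>y\<in>I. (\<Sum>a<n. r x a * r y a) ^ 4)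
      = (real k) ^ 4 + (real (card S) - 1) * (real k) ^ 3" if "x \<in> I" for x
  proof -
    obtain W i where x: "x = (W, i)" "W \<in> S" "i < n"
      using \<open>x \<in> I\<close> by (auto simp: I_def)
    have "(\<Sum>y\<in>I. (\<Sum>a<n. r x a * r y a) ^ 4) = (\<Sum>V\<in>S. \<Sum>j<n. ((W * transpose_mat V) $$ (i, j)) ^ 4)"
      unfolding I_def sum.cartesian_product'
      using x by (intro sum.cong refl) (simp add: r_def index_mult_transpose_mat[OF carrier[OF x(2)] carrier])
    then show ?thesis
      using sum_pow4_mult_transpose_mutually_unbiased_wm[OF assms(1-3) x(2,3)] by simp
  qed
  have "(\<Sum>x\<in>I. \<Sum>p\<in>?P. tensor4 (r x) p * quartic_test p) = N * (24 * (real k)\<^sup>2 - 5 * real k)"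
    using row_test card_I by simp
  moreover have "(\<Sum>x\<in>I. \<Sum>y\<in>I. (\<Sum>a<n. r x a * r y a) ^ 4)
      = N * ((real k) ^ 4 + (real (card S) - 1) * (real k) ^ 3)"
    using row_overlap card_I by simp
  moreover have "(\<Sum>p\<in>?P. (quartic_test p)\<^sup>2) = 192 * (real n)\<^sup>2 + 169 * real n"
    by (simp add: sum_quartic_test_squared)
  ultimately show ?thesis
    using tensor4_design_bound[where I = I and r = r and A = "{..<n}" and Q = quartic_test] by simp
qed

lemma card_mutually_unbiased_wm_bound:
  assumes "finite S" "S \<noteq> {}" "mutually_unbiased_wm n k S" "k > 0"
  defines "m \<equiv> real (card S)"
  shows "real n * m * (24 * (real k)\<^sup>2 - 5 * real k)\<^sup>2
    \<le> ((real k) ^ 4 + (m - 1) * (real k) ^ 3) * (192 * (real n)\<^sup>2 + 169 * real n)"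
proof -
  define N c d e where "N = real n * m" and "c = 24 * (real k)\<^sup>2 - 5 * real k"
    and "d = (real k) ^ 4 + (m - 1) * (real k) ^ 3" and "e = 192 * (real n)\<^sup>2 + 169 * real n"
  have "N * (N * c\<^sup>2) \<le> N * (d * e)"
    using mutually_unbiased_wm_design_inequality[OF assms(1,3,4)]
    by (simp add: N_def c_def d_def e_def m_def power2_eq_square mult_ac)
  moreover have "m \<ge> 1"
    using assms(1,2) by (simp add: m_def Suc_le_eq card_gt_0_iff)
  then have "N \<ge> 0" "d \<ge> 0" "e \<ge> 0"
    by (simp_all add: N_def d_def e_def)
  ultimately have "N * c\<^sup>2 \<le> d * e"
    by (cases "N = 0") (simp_all add: mult_le_cancel_left_pos)
  then show ?thesis
    by (simp add: N_def c_def d_def e_def)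
qed

lemma card_mutually_unbiased_wm_20_9:
  assumes "finite S" "mutually_unbiased_wm 20 9 S"
  shows "card S \<le> 34"
proof (cases "S = {}")
  case False
  have "20 * real (card S) * 1899\<^sup>2 \<le> (6561 + (real (card S) - 1) * 729) * 80180"
    using card_mutually_unbiased_wm_bound[OF assms(1) False assms(2)] by simp
  then show ?thesis
    by simp
qed simp

definition int_mat :: "int list list \<Rightarrow> real mat" where
  "int_mat L = mat (length L) (length L) (\<lambda>(i, j). of_int (L ! i ! j))"

definition row_dot :: "int list \<Rightarrow> int list \<Rightarrow> int" where
  "row_dot r s = sum_list (map2 (*) r s)"

text \<open>The Gram condition is a list equation so that it can be decided by simplification.\<close>

definition weighing_rows :: "nat \<Rightarrow> int list list \<Rightarrow> bool" where
  "weighing_rows k L \<longleftrightarrow>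
     (\<forall>r\<in>set L. length r = length L \<and> set r \<subseteq> {1, -1, 0}) \<and>
     map (\<lambda>r. map (row_dot r) L) L
       = map (\<lambda>i. map (\<lambda>j. if i = j then int k else 0) [0..<length L]) [0..<length L]"

lemma index_int_mat_mult_transpose:
  assumes "\<forall>r\<in>set L. length r = length L" "\<forall>r\<in>set M. length r = length L" "length M = length L"
    and "i < length L" "j < length L"
  shows "(int_mat L * transpose_mat (int_mat M)) $$ (i, j) = of_int (row_dot (L ! i) (M ! j))"
proof -
  let ?n = "length L"
  have "(int_mat L * transpose_mat (int_mat M)) $$ (i, j) = (\<Sum>a<?n. int_mat L $$ (i, a) * int_mat M $$ (j, a))"
    using assms by (intro index_mult_transpose_mat) (auto simp: int_mat_def)
  also have "\<dots> = of_int (\<Sum>a<?n. L ! i ! a * M ! j ! a)"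
    using assms by (simp add: int_mat_def)
  also have "(\<Sum>a<?n. L ! i ! a * M ! j ! a) = row_dot (L ! i) (M ! j)"
    using assms by (simp add: row_dot_def sum_list_sum_nth atLeast0LessThan)
  finally show ?thesis .
qed

lemma weighing_matrix_int_mat:
  assumes "weighing_rows k L"
  shows "weighing_matrix (length L) k (int_mat L)"
proof -
  have rows: "\<forall>r\<in>set L. length r = length L" and entries: "\<forall>r\<in>set L. set r \<subseteq> {1, -1, 0}"
    and gram_list: "map (\<lambda>r. map (row_dot r) L) L
      = map (\<lambda>i. map (\<lambda>j. if i = j then int k else 0) [0..<length L]) [0..<length L]"
    using assms by (auto simp: weighing_rows_def)
  have gram: "row_dot (L ! i) (L ! j) = (if i = j then int k else 0)"
    if "i < length L" "j < length L" for i j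
  proof -
    have "map (\<lambda>r. map (row_dot r) L) L ! i ! j
        = map (\<lambda>i. map (\<lambda>j. if i = j then int k else 0) [0..<length L]) [0..<length L] ! i ! j"
      by (simp only: gram_list)
    then show ?thesis
      using that by simp
  qed
  show ?thesis
    unfolding weighing_matrix_def
  proof (intro conjI allI impI)
    show "int_mat L \<in> carrier_mat (length L) (length L)"
      by (simp add: int_mat_def)
    fix i j assume ij: "i < length L" "j < length L"
    then have "L ! i ! j \<in> {1, -1, 0}"
      using entries rows by (metis nth_mem subsetD)
    then show "int_mat L $$ (i, j) \<in> {1, -1, 0}"
      using ij by (auto simp: int_mat_def)
  next
    show "int_mat L * transpose_mat (int_mat L) = of_nat k \<cdot>\<^sub>m 1\<^sub>m (length L)"
    proof (rule eq_matI)
      fix i j assume "i < dim_row (of_nat k \<cdot>\<^sub>m 1\<^sub>m (length L) :: real mat)"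
        "j < dim_col (of_nat k \<cdot>\<^sub>m 1\<^sub>m (length L) :: real mat)"
      then have ij: "i < length L" "j < length L"
        by auto
      show "(int_mat L * transpose_mat (int_mat L)) $$ (i, j)
          = (of_nat k \<cdot>\<^sub>m 1\<^sub>m (length L) :: real mat) $$ (i, j)"
        by (subst index_int_mat_mult_transpose[OF rows rows refl ij]) (simp add: gram ij)
    qed (auto simp: int_mat_def)
  qed
qed

lemma unbiased_wm_int_mat:
  assumes "weighing_rows k L" "weighing_rows k M" "length M = length L" "k = s\<^sup>2" "s > 0"
    and "\<forall>r\<in>set L. \<forall>t\<in>set M. row_dot r t \<in> {int s, - int s, 0}"
  shows "unbiased_wm (length L) k (int_mat L) (int_mat M)"
proof (rule unbiased_wm_of_entries)
  show "weighing_matrix (length L) k (int_mat L)" "weighing_matrix (length L) k (int_mat M)"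
    using weighing_matrix_int_mat assms(1,2,3) by metis+
  show "k > 0"
    using assms(4,5) by simp
  have rows: "\<forall>r\<in>set L. length r = length L" "\<forall>r\<in>set M. length r = length L"
    using assms(1,2,3) by (auto simp: weighing_rows_def)
  fix i j assume ij: "i < length L" "j < length L"
  have "sqrt k = s"
    using assms(4) by simp
  moreover have "row_dot (L ! i) (M ! j) \<in> {int s, - int s, 0}"
    using assms(3,6) ij by simp
  ultimately show "(int_mat L * transpose_mat (int_mat M)) $$ (i, j) \<in> {sqrt k, - sqrt k, 0}"
    using ij assms(3) by (auto simp: index_int_mat_mult_transpose[OF rows assms(3)])
qed

definition rows_W1 :: "int list list" where
  "rows_W1 = [
    [0, 1, 1, 1, 1, 1, 1, 1, 1, 1, 0, 0, 0, 0, 0, 0, 0, 0, 0, 0],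
    [1, 0, 1, 1, 1, - 1, - 1, 1, - 1, - 1, 0, 0, 0, 0, 0, 0, 0, 0, 0, 0],
    [1, 1, 0, 1, - 1, 1, - 1, - 1, 1, - 1, 0, 0, 0, 0, 0, 0, 0, 0, 0, 0],
    [1, 1, 1, 0, - 1, - 1, 1, - 1, - 1, 1, 0, 0, 0, 0, 0, 0, 0, 0, 0, 0],
    [1, 1, - 1, - 1, 0, 1, 1, 1, - 1, - 1, 0, 0, 0, 0, 0, 0, 0, 0, 0, 0],
    [1, - 1, 1, - 1, 1, 0, 1, - 1, 1, - 1, 0, 0, 0, 0, 0, 0, 0, 0, 0, 0],
    [1, - 1, - 1, 1, 1, 1, 0, - 1, - 1, 1, 0, 0, 0, 0, 0, 0, 0, 0, 0, 0],
    [1, 1, - 1, - 1, 1, - 1, - 1, 0, 1, 1, 0, 0, 0, 0, 0, 0, 0, 0, 0, 0],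
    [1, - 1, 1, - 1, - 1, 1, - 1, 1, 0, 1, 0, 0, 0, 0, 0, 0, 0, 0, 0, 0],
    [1, - 1, - 1, 1, - 1, - 1, 1, 1, 1, 0, 0, 0, 0, 0, 0, 0, 0, 0, 0, 0],
    [0, 0, 0, 0, 0, 0, 0, 0, 0, 0, 0, 1, 1, 1, 1, 1, 1, 1, 1, 1],
    [0, 0, 0, 0, 0, 0, 0, 0, 0, 0, 1, 0, 1, 1, 1, - 1, - 1, 1, - 1, - 1],
    [0, 0, 0, 0, 0, 0, 0, 0, 0, 0, 1, 1, 0, 1, - 1, 1, - 1, - 1, 1, - 1],
    [0, 0, 0, 0, 0, 0, 0, 0, 0, 0, 1, 1, 1, 0, - 1, - 1, 1, - 1, - 1, 1],
    [0, 0, 0, 0, 0, 0, 0, 0, 0, 0, 1, 1, - 1, - 1, 0, 1, 1, 1, - 1, - 1],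
    [0, 0, 0, 0, 0, 0, 0, 0, 0, 0, 1, - 1, 1, - 1, 1, 0, 1, - 1, 1, - 1],
    [0, 0, 0, 0, 0, 0, 0, 0, 0, 0, 1, - 1, - 1, 1, 1, 1, 0, - 1, - 1, 1],
    [0, 0, 0, 0, 0, 0, 0, 0, 0, 0, 1, 1, - 1, - 1, 1, - 1, - 1, 0, 1, 1],
    [0, 0, 0, 0, 0, 0, 0, 0, 0, 0, 1, - 1, 1, - 1, - 1, 1, - 1, 1, 0, 1],
    [0, 0, 0, 0, 0, 0, 0, 0, 0, 0, 1, - 1, - 1, 1, - 1, - 1, 1, 1, 1, 0]]"

definition rows_W2 :: "int list list" where
  "rows_W2 = [
    [0, 0, 0, 0, 0, 1, - 1, 0, - 1, 1, 0, 0, 0, 1, 0, 1, 0, - 1, 1, 1],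
    [0, 0, 0, 1, 0, 0, 1, - 1, - 1, 0, 0, 0, 0, - 1, 0, 1, 1, 1, 0, 1],
    [0, 0, 0, 1, - 1, - 1, 0, 0, 0, 1, 1, 0, 0, 1, - 1, 0, - 1, 1, 0, 0],
    [0, 1, 0, - 1, 0, 0, 0, - 1, 0, 1, 0, - 1, - 1, 0, 0, 1, 0, 0, - 1, - 1],
    [0, 1, 1, 0, 0, 0, - 1, 0, 0, - 1, - 1, 0, - 1, 0, - 1, 0, 0, 1, 1, 0],
    [0, 1, - 1, 0, - 1, 1, 0, 0, 0, 0, - 1, 1, 1, 0, - 1, 0, 0, 0, - 1, 0],
    [1, 0, 0, - 1, - 1, 0, 0, 0, - 1, 0, 1, 1, - 1, 0, 0, - 1, 1, 0, 0, 0],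
    [1, 0, 1, 0, 0, 1, 0, 0, 1, 0, 0, 0, 0, 1, 1, 0, 0, 1, - 1, 1],
    [1, 0, - 1, 0, 0, 0, - 1, - 1, 0, 0, 0, - 1, 0, - 1, 0, - 1, - 1, 0, 0, 1],
    [1, 1, 0, 0, 1, 0, 0, 1, 0, 0, 1, - 1, 1, 0, - 1, 0, 1, 0, 0, 0],
    [0, 0, 0, 1, 0, 1, 0, - 1, 1, 1, 0, 0, 0, 0, 0, - 1, 1, 0, 1, - 1],
    [0, 0, 0, - 1, 0, 1, 1, 1, 0, 1, 0, 0, 0, - 1, 0, 0, - 1, 1, 1, 0],
    [1, 0, 0, 1, - 1, 0, - 1, 1, 0, 0, 0, 0, 0, - 1, 1, 1, 0, 0, 0, - 1],
    [0, - 1, - 1, 0, 0, 1, 0, 0, - 1, - 1, 0, - 1, 0, 1, 0, 0, 0, 1, 0, - 1],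
    [- 1, 0, - 1, 0, - 1, 0, 0, 1, 1, 0, 0, - 1, - 1, 0, 0, 0, 1, 0, 0, 1],
    [- 1, 1, 1, 0, - 1, 0, 0, 0, - 1, 0, 0, - 1, 1, 0, 1, - 1, 0, 0, 0, 0],
    [1, 1, - 1, 0, 0, - 1, 1, 0, 0, 0, - 1, 0, 0, 1, 1, 0, 0, 0, 1, 0],
    [0, 0, 0, 1, 1, 0, 0, 1, - 1, 1, - 1, 0, - 1, 0, 0, - 1, 0, 0, - 1, 0],
    [0, - 1, 0, - 1, 0, - 1, - 1, 0, 0, 1, - 1, 0, 1, 0, 0, 0, 1, 1, 0, 0],
    [1, - 1, 1, 0, - 1, 0, 1, 0, 0, 0, - 1, - 1, 0, 0, - 1, 0, 0, - 1, 0, 0]]"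

definition rows_W3 :: "int list list" where
  "rows_W3 = [
    [0, 0, 0, 0, 0, 1, - 1, 0, - 1, 1, 0, 0, 0, 1, 1, - 1, 1, 1, 0, 0],
    [0, 0, 0, 1, 0, 0, 1, - 1, - 1, 0, 0, 0, 0, - 1, 1, - 1, - 1, 0, - 1, 0],
    [0, 0, 0, 1, - 1, - 1, 0, 0, 0, 1, 0, 0, - 1, 0, 1, 1, 0, 0, 1, 1],
    [0, 1, 0, - 1, - 1, 0, 1, 0, 0, 0, 1, - 1, 0, - 1, 0, 0, 1, 1, 0, 0],
    [0, 1, 1, 0, 0, 0, - 1, 0, 0, - 1, 0, - 1, - 1, 0, 1, 0, 0, - 1, 0, - 1],
    [0, 1, - 1, 0, 0, 0, 0, - 1, 1, 0, 1, 0, 0, 1, 0, - 1, - 1, 0, 1, 0],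
    [1, 0, 0, - 1, 0, - 1, 0, - 1, 0, 0, 0, 1, 1, 0, 1, 0, 1, - 1, 0, 0],
    [1, 0, 1, 0, 0, 1, 0, 0, 1, 0, - 1, 0, 0, - 1, 0, - 1, 0, 0, 1, 1],
    [1, 0, - 1, 0, - 1, 0, 0, 0, 0, - 1, - 1, 1, - 1, 0, 0, 0, 0, 1, 0, - 1],
    [1, 1, 0, 0, 1, 0, 0, 1, 0, 0, 1, 1, - 1, 0, 0, 0, 0, 0, - 1, 1],
    [0, 0, 0, 1, 1, - 1, 1, 1, 0, 0, 0, 0, 0, 0, 0, - 1, 1, 0, 1, - 1],
    [0, 0, 0, - 1, 1, - 1, - 1, 0, - 1, 0, 0, 0, 0, - 1, 0, 0, - 1, 1, 1, 0],
    [0, 0, - 1, 0, 1, 1, 0, 0, 1, 1, 0, 0, 0, - 1, 1, 1, 0, 0, 0, - 1],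
    [1, - 1, 0, - 1, 0, 0, 1, 1, 0, 0, 0, - 1, 0, 1, 1, 0, - 1, 0, 0, 0],
    [0, - 1, - 1, 0, 1, 0, 0, - 1, 0, - 1, 0, - 1, - 1, 0, 0, 0, 1, 0, 0, 1],
    [1, 0, 0, 1, 0, - 1, - 1, 0, 1, 0, 0, - 1, 1, 0, 0, 0, 0, 1, - 1, 0],
    [0, 1, 1, 0, 1, 0, 1, - 1, 0, 0, - 1, 0, 0, 1, 0, 1, 0, 1, 0, 0],
    [- 1, 0, 0, - 1, 0, - 1, 0, 0, 1, 1, - 1, 0, - 1, 0, 0, - 1, 0, 0, - 1, 0],
    [- 1, 1, - 1, 0, 0, 0, 0, 1, 0, - 1, - 1, 0, 1, 0, 1, 0, 0, 0, 0, 1],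
    [1, 1, - 1, 0, 0, 0, 0, 0, - 1, 1, - 1, - 1, 0, 0, - 1, 0, 0, - 1, 0, 0]]"

definition rows_W4 :: "int list list" where
  "rows_W4 = [
    [0, 0, 0, 0, 0, 1, - 1, 0, - 1, 1, 0, 0, 0, 1, - 1, 0, - 1, 0, - 1, - 1],
    [0, 0, 0, 1, 0, 0, 1, - 1, - 1, 0, 0, 1, 0, 1, 0, 0, - 1, 0, 1, 1],
    [0, 0, 1, 0, 0, 1, 0, - 1, 0, - 1, 0, - 1, 1, - 1, 0, 0, - 1, - 1, 0, 0],
    [0, 1, 0, 0, 1, 0, 0, 0, - 1, - 1, 1, - 1, - 1, 0, 0, 1, 0, 1, 0, 0],
    [0, 1, 0, - 1, 0, 0, 0, - 1, 0, 1, 1, 0, 0, 0, - 1, 0, 1, - 1, 1, 0],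
    [0, 1, - 1, 0, - 1, 1, 0, 0, 0, 0, 1, 0, 0, 0, 1, - 1, 0, 0, - 1, 1],
    [1, 0, 0, 0, 1, 1, 1, 0, 0, 0, 0, 1, - 1, - 1, 0, - 1, 0, 0, 0, - 1],
    [1, 0, 0, - 1, - 1, 0, 0, 0, - 1, 0, 0, 1, 1, - 1, 0, 1, 0, 1, 0, 0],
    [1, 0, - 1, 0, 0, 0, - 1, - 1, 0, 0, - 1, 0, - 1, 0, 1, 1, 0, - 1, 0, 0],
    [1, 1, 1, 1, 0, 0, 0, 0, 0, 0, - 1, 0, 0, 0, - 1, 0, 1, 0, - 1, 1],
    [0, 0, 0, 1, - 1, 0, - 1, 0, - 1, - 1, 0, 0, 0, 0, 0, - 1, 1, 0, 1, - 1],
    [0, 1, 0, 1, 0, 0, - 1, 0, 1, 1, 0, 0, 0, - 1, 0, 0, - 1, 1, 1, 0],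
    [0, - 1, 1, - 1, 0, 0, - 1, - 1, 0, 0, 0, 0, - 1, 0, 0, - 1, 0, 1, 0, 1],
    [1, - 1, - 1, 0, 0, 1, 0, 1, 0, 0, 0, - 1, 0, 0, - 1, 0, 0, 0, 1, 1],
    [1, 0, 0, 0, - 1, 0, 1, - 1, 1, 0, 0, - 1, 0, 1, 0, 0, 0, 1, 0, - 1],
    [1, 0, 0, 0, 1, - 1, 0, 0, - 1, 1, 0, - 1, 1, 0, 1, - 1, 0, 0, 0, 0],
    [0, 1, - 1, - 1, 0, - 1, 0, 0, 0, - 1, - 1, 0, 0, 0, - 1, - 1, - 1, 0, 0, 0],
    [0, 1, 1, - 1, 0, 1, 0, 1, 0, 0, - 1, 0, 0, 1, 1, 0, 0, 0, 1, 0],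
    [- 1, 0, - 1, 0, 1, 1, 0, - 1, 0, 0, - 1, 0, 1, 0, 0, 0, 1, 1, 0, 0],
    [- 1, 0, 0, 0, - 1, 0, 1, 0, - 1, 1, - 1, - 1, - 1, - 1, 0, 0, 0, 0, 0, 0]]"

lemma weighing_rows_W:
  "weighing_rows 9 rows_W1" "weighing_rows 9 rows_W2" "weighing_rows 9 rows_W3" "weighing_rows 9 rows_W4"
  by (simp_all add: weighing_rows_def row_dot_def rows_W1_def rows_W2_def rows_W3_def rows_W4_def upt_rec)

lemma unbiased_rows_W:
  "\<forall>r\<in>set rows_W1. \<forall>t\<in>set rows_W2. row_dot r t \<in> {3, -3, 0}"
  "\<forall>r\<in>set rows_W1. \<forall>t\<in>set rows_W3. row_dot r t \<in> {3, -3, 0}"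
  "\<forall>r\<in>set rows_W1. \<forall>t\<in>set rows_W4. row_dot r t \<in> {3, -3, 0}"
  "\<forall>r\<in>set rows_W2. \<forall>t\<in>set rows_W3. row_dot r t \<in> {3, -3, 0}"
  "\<forall>r\<in>set rows_W2. \<forall>t\<in>set rows_W4. row_dot r t \<in> {3, -3, 0}"
  "\<forall>r\<in>set rows_W3. \<forall>t\<in>set rows_W4. row_dot r t \<in> {3, -3, 0}"
  by (simp_all add: row_dot_def rows_W1_def rows_W2_def rows_W3_def rows_W4_def)

lemma mutually_unbiased_wm_20_9_example:
  defines "S \<equiv> {int_mat rows_W1, int_mat rows_W2, int_mat rows_W3, int_mat rows_W4}"
  shows "mutually_unbiased_wm 20 9 S" "card S = 4"
proof -
  have len: "length rows_W1 = 20" "length rows_W2 = 20" "length rows_W3 = 20" "length rows_W4 = 20"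
    by (simp_all add: rows_W1_def rows_W2_def rows_W3_def rows_W4_def)
  have wm: "W \<in> S \<Longrightarrow> weighing_matrix 20 9 W" for W
    using weighing_matrix_int_mat[OF weighing_rows_W(1)] weighing_matrix_int_mat[OF weighing_rows_W(2)]
      weighing_matrix_int_mat[OF weighing_rows_W(3)] weighing_matrix_int_mat[OF weighing_rows_W(4)]
    by (auto simp: S_def len)
  have pair: "unbiased_wm 20 9 (int_mat L) (int_mat M)"
    if "weighing_rows 9 L" "weighing_rows 9 M" "length L = 20" "length M = 20"
      "\<forall>r\<in>set L. \<forall>t\<in>set M. row_dot r t \<in> {3, -3, 0}" for L M
    using unbiased_wm_int_mat[OF that(1,2), of 3] that(3-5) by simp
  note U = pair[OF weighing_rows_W(1,2) len(1,2) unbiased_rows_W(1)]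
    pair[OF weighing_rows_W(1,3) len(1,3) unbiased_rows_W(2)]
    pair[OF weighing_rows_W(1,4) len(1,4) unbiased_rows_W(3)]
    pair[OF weighing_rows_W(2,3) len(2,3) unbiased_rows_W(4)]
    pair[OF weighing_rows_W(2,4) len(2,4) unbiased_rows_W(5)]
    pair[OF weighing_rows_W(3,4) len(3,4) unbiased_rows_W(6)]
  have unb: "unbiased_wm 20 9 W V" if "W \<in> S" "V \<in> S" "W \<noteq> V" for W V
    using that U unbiased_wm_commute[OF U(1)] unbiased_wm_commute[OF U(2)]
      unbiased_wm_commute[OF U(3)] unbiased_wm_commute[OF U(4)]
      unbiased_wm_commute[OF U(5)] unbiased_wm_commute[OF U(6)]
    by (auto simp: S_def)
  show "mutually_unbiased_wm 20 9 S"
    using wm unb by (simp add: mutually_unbiased_wm_def)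
  have "\<not> unbiased_wm 20 9 W W" for W
    by (rule not_unbiased_wm_self) simp_all
  then have "int_mat rows_W1 \<noteq> int_mat rows_W2" "int_mat rows_W1 \<noteq> int_mat rows_W3"
    "int_mat rows_W1 \<noteq> int_mat rows_W4" "int_mat rows_W2 \<noteq> int_mat rows_W3" "int_mat rows_W2 \<noteq> int_mat rows_W4" "int_mat rows_W3 \<noteq> int_mat rows_W4"
    using U by metis+
  then show "card S = 4"
    by (simp add: S_def)
qed

theorem proposition6p9:
  shows "W_max 20 9 \<in> {4..34}"
proof -
  define X where "X = {card S | S. finite S \<and> mutually_unbiased_wm 20 9 S}"
  have X_bounded: "X \<subseteq> {..34}"
    using card_mutually_unbiased_wm_20_9 by (auto simp: X_def)
  have "4 \<in> X"
    unfolding X_def using mutually_unbiased_wm_20_9_example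
    by (intro CollectI exI[of _ "{int_mat rows_W1, int_mat rows_W2, int_mat rows_W3, int_mat rows_W4}"]) auto
  moreover have "finite X"
    using X_bounded finite_subset by blast
  ultimately have "4 \<le> Max X" "Max X \<in> X"
    by (auto intro: Max_in)
  then show ?thesis
    using X_bounded by (auto simp: W_max_def X_def)
qed

end
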